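(* Fix an integer $a\ge 2$ and an integer $k\ge 2$. Let $n\to\infty$ and let $m=m(n)=o\!\left(n^{1+1/k}\right)$. Then all hypergraphs $H\in\mathcal{H}(a,n,m)$, except for $o\!\left(\binom{\binom{n}{a}}{m}\right)$ of them, contain at most $n$ Berge-cycles of length at most $k$.
   Context: $\mathcal{H}(a,n,m)$ is the family of all $a$-uniform hypergraphs on vertex set $[n]$ with exactly $m$ hyperedges; $|\mathcal{H}(a,n,m)|=\binom{\binom{n}{a}}{m}$. A Berge-cycle of length $l\ge 2$ consists of $l$ distinct hyperedges $e_1,\dots,e_l$ and $l$ distinct vertices $v_1,\dots,v_l$ with $v_i\in e_i\cap e_{i+1}$ for $i=1,\dots,l$ (indices modulo $l$). *)

theory Defs
  imports Complex_Main
begin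

definition hyp_family :: "nat \<Rightarrow> nat \<Rightarrow> nat \<Rightarrow> nat set set set" where
  "hyp_family a n m = {H. H \<subseteq> {e. e \<subseteq> {1..n} \<and> card e = a} \<and> card H = m}"

text \<open>A Berge-cycle of length l, given by distinct hyperedges e_0..e_(l-1) and distinct
  vertices v_0..v_(l-1) with v_i in e_i and e_(i+1 mod l), is identified with its
  set of incidences (a cycle of length 2l in the vertex-edge incidence graph); this
  identifies the 2l rotations/reflections of the same cycle.\<close>
definition berge_cycles :: "'v set set \<Rightarrow> nat \<Rightarrow> ('v \<times> 'v set) set set" where
  "berge_cycles H l =
     {(\<Union>i<l. {(v i, e i), (v i, e (Suc i mod l))}) | e v.
        inj_on e {..<l} \<and> inj_on v {..<l} \<and> e ` {..<l} \<subseteq> H \<and>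
        (\<forall>i<l. v i \<in> e i \<and> v i \<in> e (Suc i mod l))}"

definition berge_cycles_upto :: "'v set set \<Rightarrow> nat \<Rightarrow> ('v \<times> 'v set) set set" where
  "berge_cycles_upto H k = (\<Union>l\<in>{2..k}. berge_cycles H l)"

end

theory Submission imports Defs "HOL-Library.FuncSet" begin

text \<open>First moment method. A Berge-cycle of length \<open>l\<close> is determined by \<open>l\<close> distinct
  vertices \<open>v\<^sub>j\<close> and \<open>l\<close> distinct edges, the \<open>j\<close>-th containing \<open>v\<^sub>j\<^sub>-\<^sub>1\<close> and \<open>v\<^sub>j\<close>; this gives at
  most \<open>n\<^sup>l (n\<^bsup>a-2\<^esup>)\<^sup>l\<close> candidates. A fixed set of \<open>l\<close> edges lies in at most a fraction
  \<open>(m/N)\<^sup>l\<close> of \<open>\<H>(a,n,m)\<close>, where \<open>N = (n choose a) \<ge> (n/a)\<^sup>a\<close>. So the average number of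
  Berge-cycles of length at most \<open>k\<close> is at most \<open>\<Sum>\<^sub>l (a\<^sup>a m/n)\<^sup>l\<close>, and since \<open>l \<le> k\<close>,
  \<open>(m/n)\<^sup>l \<le> n (m/n\<^bsup>1+1/k\<^esup>)\<^sup>l = o(n)\<close>. Markov's inequality finishes the proof.\<close>

lemma binomial_diff_mult_pow_le:
  fixes N m l :: nat
  assumes "l \<le> m" "m \<le> N"
  shows "((N - l) choose (m - l)) * N ^ l \<le> (N choose m) * m ^ l"
  using assms
proof (induction l)
  case 0
  then show ?case by simp
next
  case (Suc l)
  have IH: "((N - l) choose (m - l)) * N ^ l \<le> (N choose m) * m ^ l"
    using Suc by simp
  have "Suc (N - Suc l) = N - l" "Suc (m - Suc l) = m - l"
    using Suc.prems by auto
  then have step: "(N - l) * ((N - Suc l) choose (m - Suc l)) = ((N - l) choose (m - l)) * (m - l)"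
    using Suc_times_binomial_eq[of "N - Suc l" "m - Suc l"] by simp
  have "(m - l) * N = m * N - l * N"
    by (simp add: diff_mult_distrib)
  also have "\<dots> \<le> m * N - l * m"
    using Suc.prems by (intro diff_le_mono2) simp
  also have "\<dots> = m * (N - l)"
    by (simp add: diff_mult_distrib2 mult.commute)
  finally have ml: "(m - l) * N \<le> m * (N - l)" .
  have "(N - l) * (((N - Suc l) choose (m - Suc l)) * N ^ Suc l)
      = (((N - l) choose (m - l)) * N ^ l) * ((m - l) * N)"
    using step by (simp add: mult_ac)
  also have "\<dots> \<le> ((N choose m) * m ^ l) * (m * (N - l))"
    using IH ml by (rule mult_le_mono)
  also have "\<dots> = (N - l) * ((N choose m) * m ^ Suc l)"
    by (simp add: mult_ac)
  finally show ?case
    using Suc.prems by simp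
qed

lemma card_supersets_mult_pow_le:
  assumes "finite U" "E \<subseteq> U" "card E = l"
  shows "card {H. H \<subseteq> U \<and> card H = m \<and> E \<subseteq> H} * card U ^ l \<le> (card U choose m) * m ^ l"
proof (cases "l \<le> m \<and> m \<le> card U")
  case False
  have "{H. H \<subseteq> U \<and> card H = m \<and> E \<subseteq> H} = {}"
  proof -
    have False if "H \<subseteq> U" "E \<subseteq> H" "card H = m" for H
      using False assms that card_mono[OF \<open>finite U\<close> \<open>H \<subseteq> U\<close>]
        card_mono[OF finite_subset[OF \<open>H \<subseteq> U\<close> \<open>finite U\<close>] \<open>E \<subseteq> H\<close>] by auto
    then show ?thesis by blast
  qed
  then show ?thesis
    by (metis card.empty mult_0 zero_le)
next
  case True
  have "finite E"
    using assms finite_subset by blast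
  have bij: "bij_betw (\<lambda>H. H - E) {H. H \<subseteq> U \<and> card H = m \<and> E \<subseteq> H} {B. B \<subseteq> U - E \<and> card B = m - l}"
  proof (rule bij_betw_byWitness[where f' = "\<lambda>B. B \<union> E"])
    show "(\<lambda>B. B \<union> E) ` {B. B \<subseteq> U - E \<and> card B = m - l} \<subseteq> {H. H \<subseteq> U \<and> card H = m \<and> E \<subseteq> H}"
    proof clarify
      fix B
      assume B: "B \<subseteq> U - E" "card B = m - l"
      then have "card (B \<union> E) = card B + card E"
        using assms \<open>finite E\<close> by (intro card_Un_disjoint) (auto intro: finite_subset)
      then show "B \<union> E \<subseteq> U \<and> card (B \<union> E) = m \<and> E \<subseteq> B \<union> E"
        using B assms True by auto
    qed
  qed (use assms \<open>finite E\<close> in \<open>auto simp: card_Diff_subset\<close>)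
  have "card {H. H \<subseteq> U \<and> card H = m \<and> E \<subseteq> H} = (card U - l) choose (m - l)"
    using bij_betw_same_card[OF bij] n_subsets[of "U - E" "m - l"] assms \<open>finite E\<close>
    by (simp add: card_Diff_subset)
  then show ?thesis
    using binomial_diff_mult_pow_le[of l m "card U"] True by simp
qed

lemma card_subsets_containing_pair_le:
  assumes "finite A" "u \<noteq> w"
  shows "card {S. S \<subseteq> A \<and> card S = a \<and> u \<in> S \<and> w \<in> S} \<le> card A ^ (a - 2)"
proof -
  have "inj_on (\<lambda>S. S - {u, w}) {S. S \<subseteq> A \<and> card S = a \<and> u \<in> S \<and> w \<in> S}"
    by (rule inj_onI) blast
  moreover have "(\<lambda>S. S - {u, w}) ` {S. S \<subseteq> A \<and> card S = a \<and> u \<in> S \<and> w \<in> S}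
      \<subseteq> {B. B \<subseteq> A \<and> card B = a - 2}"
  proof clarify
    fix S
    assume "S \<subseteq> A" "u \<in> S" "w \<in> S"
    then have "finite S"
      using assms finite_subset by blast
    with \<open>S \<subseteq> A\<close> \<open>u \<in> S\<close> \<open>w \<in> S\<close> show "S - {u, w} \<subseteq> A \<and> card (S - {u, w}) = card S - 2"
      using assms by (auto simp: card_Diff_subset)
  qed
  ultimately have "card {S. S \<subseteq> A \<and> card S = a \<and> u \<in> S \<and> w \<in> S} \<le> card {B. B \<subseteq> A \<and> card B = a - 2}"
    using assms by (intro card_inj_on_le) auto
  also have "\<dots> = card A choose (a - 2)"
    using n_subsets[OF \<open>finite A\<close>] .
  also have "\<dots> \<le> card A ^ (a - 2)"
    by (cases "a - 2 \<le> card A") (auto simp: binomial_le_pow binomial_eq_0)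
  finally show ?thesis .
qed

lemma sum_card_filter_swap:
  assumes "finite A" "finite B"
  shows "(\<Sum>x\<in>A. card {y\<in>B. P x y}) = (\<Sum>y\<in>B. card {x\<in>A. P x y})"
proof -
  have count: "\<And>S Q. finite S \<Longrightarrow> card {y\<in>S. Q y} = (\<Sum>y\<in>S. if Q y then 1 else 0::nat)"
    by (simp add: sum.If_cases Int_def)
  show ?thesis
    using assms by (simp add: count sum.swap[of _ A])
qed

lemma card_filter_gt_mult_le_sum:
  fixes f :: "'a \<Rightarrow> nat"
  assumes "finite A"
  shows "card {x\<in>A. t < f x} * t \<le> (\<Sum>x\<in>A. f x)"
proof -
  have "card {x\<in>A. t < f x} * t = (\<Sum>x\<in>{x\<in>A. t < f x}. t)"
    by simp
  also have "\<dots> \<le> (\<Sum>x\<in>{x\<in>A. t < f x}. f x)"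
    by (intro sum_mono) auto
  also have "\<dots> \<le> (\<Sum>x\<in>A. f x)"
    using assms by (intro sum_mono2) auto
  finally show ?thesis .
qed

definition cycle_pred :: "nat \<Rightarrow> nat \<Rightarrow> nat" where
  "cycle_pred l j = (j + (l - 1)) mod l"

lemma Suc_cycle_pred_mod: "j < l \<Longrightarrow> Suc (cycle_pred l j) mod l = j"
  unfolding cycle_pred_def by (simp add: mod_Suc_eq)

lemma cycle_pred_neq:
  assumes "2 \<le> l" "j < l"
  shows "cycle_pred l j \<noteq> j"
proof
  assume "cycle_pred l j = j"
  then have "Suc j mod l = j"
    using Suc_cycle_pred_mod[OF \<open>j < l\<close>] by simp
  then show False
    using assms by (cases "Suc j = l") auto
qed

text \<open>The functions are extensional so that the set is finite.\<close>
definition berge_params :: "nat \<Rightarrow> nat \<Rightarrow> nat \<Rightarrow> ((nat \<Rightarrow> nat) \<times> (nat \<Rightarrow> nat set)) set" where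
  "berge_params n a l = {(v, e). v \<in> {..<l} \<rightarrow>\<^sub>E {1..n} \<and> inj_on v {..<l} \<and>
     e \<in> (\<Pi>\<^sub>E j\<in>{..<l}. {S. S \<subseteq> {1..n} \<and> card S = a \<and> v j \<in> S \<and> v (cycle_pred l j) \<in> S}) \<and>
     inj_on e {..<l}}"

lemma finite_berge_params: "finite (berge_params n a l)"
proof (rule finite_subset)
  have "(\<Pi>\<^sub>E j\<in>{..<l}. {S. S \<subseteq> {1..n} \<and> card S = a \<and> v j \<in> S \<and> v (cycle_pred l j) \<in> S})
      \<subseteq> {..<l} \<rightarrow>\<^sub>E Pow {1..n}" for v :: "nat \<Rightarrow> nat"
    by (rule PiE_mono) auto
  then show "berge_params n a l \<subseteq> ({..<l} \<rightarrow>\<^sub>E {1..n}) \<times> ({..<l} \<rightarrow>\<^sub>E Pow {1..n})"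
    unfolding berge_params_def by blast
qed (intro finite_cartesian_product finite_PiE; simp)

lemma card_berge_params_le:
  assumes "2 \<le> l"
  shows "card (berge_params n a l) \<le> n ^ l * (n ^ (a - 2)) ^ l"
proof -
  define V where "V = {v \<in> {..<l} \<rightarrow>\<^sub>E {1..n::nat}. inj_on v {..<l}}"
  define D where
    "D v j = {S. S \<subseteq> {1..n::nat} \<and> card S = a \<and> v j \<in> S \<and> v (cycle_pred l j) \<in> S}" for v j
  have "finite V"
    unfolding V_def by (rule finite_subset[of _ "{..<l} \<rightarrow>\<^sub>E {1..n}"]) (auto intro: finite_PiE)
  have fin_D: "finite (Pi\<^sub>E {..<l} (D v))" for v
    unfolding D_def by (intro finite_PiE) auto
  have "card (berge_params n a l) \<le> card (Sigma V (\<lambda>v. Pi\<^sub>E {..<l} (D v)))"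
    using \<open>finite V\<close> fin_D by (intro card_mono) (auto simp: berge_params_def V_def D_def)
  also have "\<dots> = (\<Sum>v\<in>V. \<Prod>j<l. card (D v j))"
    using \<open>finite V\<close> fin_D by (simp add: card_PiE)
  also have "\<dots> \<le> (\<Sum>v\<in>V. \<Prod>j<l. n ^ (a - 2))"
  proof (intro sum_mono prod_mono conjI)
    fix v j
    assume "v \<in> V" "j \<in> {..<l}"
    then have "v j \<noteq> v (cycle_pred l j)"
      using cycle_pred_neq[OF assms, of j] assms
      unfolding V_def inj_on_def by (auto simp: cycle_pred_def)
    then show "card (D v j) \<le> n ^ (a - 2)"
      using card_subsets_containing_pair_le[of "{1..n}" "v j" "v (cycle_pred l j)" a]
      unfolding D_def by (simp add: conj_commute)
  qed auto
  also have "\<dots> = card V * (n ^ (a - 2)) ^ l"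
    by simp
  also have "card V \<le> card ({..<l} \<rightarrow>\<^sub>E {1..n::nat})"
    unfolding V_def by (intro card_mono) (auto intro: finite_PiE)
  also have "\<dots> = n ^ l"
    by (simp add: card_PiE)
  finally show ?thesis
    by simp
qed

lemma berge_cycles_subset_params_image:
  assumes "2 \<le> l" "H \<subseteq> {S. S \<subseteq> {1..n} \<and> card S = a}"
  shows "berge_cycles H l \<subseteq>
    (\<lambda>(v, e). \<Union>i<l. {(v i, e i), (v i, e (Suc i mod l))}) ` {p \<in> berge_params n a l. snd p ` {..<l} \<subseteq> H}"
proof
  fix c
  assume "c \<in> berge_cycles H l"
  then obtain e v where c: "c = (\<Union>i<l. {(v i, e i), (v i, e (Suc i mod l))})"
    and "inj_on e {..<l}" "inj_on v {..<l}" and eH: "e ` {..<l} \<subseteq> H"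
    and ve: "\<forall>i<l. v i \<in> e i \<and> v i \<in> e (Suc i mod l)"
    unfolding berge_cycles_def by blast
  define v' where "v' = restrict v {..<l}"
  define e' where "e' = restrict e {..<l}"
  have "0 < l"
    using assms by simp
  have edge: "e j \<subseteq> {1..n} \<and> card (e j) = a" if "j < l" for j
    using that eH assms(2) by auto
  have pred: "cycle_pred l j < l \<and> v (cycle_pred l j) \<in> e j" if "j < l" for j
    using ve Suc_cycle_pred_mod[OF that] \<open>0 < l\<close> by (metis cycle_pred_def mod_less_divisor)
  have "v j \<in> {1..n}" if "j < l" for j
    using edge[OF that] ve that by blast
  then have "v' \<in> {..<l} \<rightarrow>\<^sub>E {1..n}"
    unfolding v'_def by auto
  moreover have "e' \<in> (\<Pi>\<^sub>E j\<in>{..<l}. {S. S \<subseteq> {1..n} \<and> card S = a \<and> v' j \<in> S \<and> v' (cycle_pred l j) \<in> S})"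
    unfolding v'_def e'_def using edge ve pred by auto
  moreover have "inj_on v' {..<l}" "inj_on e' {..<l}"
    unfolding v'_def e'_def using \<open>inj_on v {..<l}\<close> \<open>inj_on e {..<l}\<close> by (auto simp: inj_on_def)
  ultimately have "(v', e') \<in> berge_params n a l"
    unfolding berge_params_def by simp
  moreover have "c = (\<Union>i<l. {(v' i, e' i), (v' i, e' (Suc i mod l))})"
    unfolding c v'_def e'_def using \<open>0 < l\<close> by (intro SUP_cong) auto
  moreover have "e' ` {..<l} \<subseteq> H"
    unfolding e'_def using eH by auto
  ultimately show "c \<in> (\<lambda>(v, e). \<Union>i<l. {(v i, e i), (v i, e (Suc i mod l))}) `
      {p \<in> berge_params n a l. snd p ` {..<l} \<subseteq> H}"
    by (intro image_eqI[where x = "(v', e')"]) auto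
qed

lemma card_berge_cycles_le:
  assumes "2 \<le> l" "H \<subseteq> {S. S \<subseteq> {1..n} \<and> card S = a}"
  shows "card (berge_cycles H l) \<le> card {p \<in> berge_params n a l. snd p ` {..<l} \<subseteq> H}"
proof -
  have "finite {p \<in> berge_params n a l. snd p ` {..<l} \<subseteq> H}"
    using finite_berge_params by simp
  then show ?thesis
    using berge_cycles_subset_params_image[OF assms] by (meson card_image_le card_mono finite_imageI le_trans)
qed

lemma finite_hyp_family: "finite (hyp_family a n m)"
  by (rule finite_subset[of _ "Pow (Pow {1..n})"]) (auto simp: hyp_family_def)

lemma card_hyp_family_supersets_le:
  assumes "p \<in> berge_params n a l"
  shows "card {H \<in> hyp_family a n m. snd p ` {..<l} \<subseteq> H} * (n choose a) ^ l
    \<le> ((n choose a) choose m) * m ^ l"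
proof -
  obtain v e where p: "p = (v, e)"
    by (cases p)
  define U where "U = {S. S \<subseteq> {1..n::nat} \<and> card S = a}"
  have "card U = n choose a"
    unfolding U_def using n_subsets[of "{1..n}" a] by simp
  have "inj_on e {..<l}" "e ` {..<l} \<subseteq> U"
    using assms unfolding p berge_params_def U_def by (auto simp: PiE_iff)
  moreover have "{H \<in> hyp_family a n m. snd p ` {..<l} \<subseteq> H} = {H. H \<subseteq> U \<and> card H = m \<and> e ` {..<l} \<subseteq> H}"
    unfolding hyp_family_def U_def p by auto
  ultimately show ?thesis
    using card_supersets_mult_pow_le[of U "e ` {..<l}" l m] \<open>card U = n choose a\<close>
    by (simp add: U_def card_image)
qed

lemma sum_card_berge_cycles_le:
  assumes "2 \<le> a" "2 \<le> l"
  shows "(\<Sum>H\<in>hyp_family a n m. card (berge_cycles H l)) * (n choose a) ^ l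
    \<le> ((n choose a) choose m) * (n ^ (a - 1) * m) ^ l"
proof -
  define F where "F = hyp_family a n m"
  define P where "P = berge_params n a l"
  have "(\<Sum>H\<in>F. card (berge_cycles H l)) \<le> (\<Sum>H\<in>F. card {p \<in> P. snd p ` {..<l} \<subseteq> H})"
    unfolding F_def P_def hyp_family_def by (intro sum_mono card_berge_cycles_le assms) auto
  also have "\<dots> = (\<Sum>p\<in>P. card {H \<in> F. snd p ` {..<l} \<subseteq> H})"
    unfolding F_def P_def by (intro sum_card_filter_swap finite_hyp_family finite_berge_params)
  finally have "(\<Sum>H\<in>F. card (berge_cycles H l)) * (n choose a) ^ l
      \<le> (\<Sum>p\<in>P. card {H \<in> F. snd p ` {..<l} \<subseteq> H} * (n choose a) ^ l)"
    unfolding sum_distrib_right[symmetric] by (rule mult_le_mono1)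
  also have "\<dots> \<le> (\<Sum>p\<in>P. ((n choose a) choose m) * m ^ l)"
    unfolding F_def P_def by (intro sum_mono card_hyp_family_supersets_le)
  also have "\<dots> = card P * (((n choose a) choose m) * m ^ l)"
    by simp
  also have "\<dots> \<le> n ^ l * (n ^ (a - 2)) ^ l * (((n choose a) choose m) * m ^ l)"
    unfolding P_def using card_berge_params_le[OF assms(2)] by (rule mult_right_mono) simp
  also have "\<dots> = ((n choose a) choose m) * (n ^ (a - 1) * m) ^ l"
  proof -
    obtain b where "a = b + 2"
      using assms(1) by (metis le_add_diff_inverse2)
    then show ?thesis
      by (simp add: power_mult_distrib mult_ac)
  qed
  finally show ?thesis
    unfolding F_def .
qed

lemma pow_div_le_pow_powr:
  fixes x :: real and n l k :: nat
  assumes "1 \<le> n" "l \<le> k" "1 \<le> k" "0 \<le> x"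
  shows "(x / real n) ^ l / real n \<le> (x / real n powr (1 + 1 / real k)) ^ l"
proof -
  have "0 < real n"
    using assms by simp
  have "(real n powr (1 / real k)) ^ l = real n powr (real l / real k)"
    using \<open>0 < real n\<close> by (simp add: powr_realpow[symmetric] powr_powr)
  also have "\<dots> \<le> real n"
    using assms powr_mono[of "real l / real k" 1 "real n"] by (simp add: divide_le_eq_1)
  finally have "(x / real n powr (1 + 1 / real k)) ^ l * (real n powr (1 / real k)) ^ l
      \<le> (x / real n powr (1 + 1 / real k)) ^ l * real n"
    using assms by (intro mult_left_mono) auto
  then have "(x / real n powr (1 + 1 / real k)) ^ l * (real n powr (1 / real k)) ^ l / real n
      \<le> (x / real n powr (1 + 1 / real k)) ^ l"
    using \<open>0 < real n\<close> by (simp add: divide_le_eq)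
  moreover have "(x / real n powr (1 + 1 / real k)) * real n powr (1 / real k) = x / real n"
    using \<open>0 < real n\<close> by (simp add: powr_add)
  ultimately show ?thesis
    by (metis power_mult_distrib)
qed

lemma pow_pred_div_binomial_le:
  assumes "1 \<le> a" "a \<le> n"
  shows "real n ^ (a - 1) / real (n choose a) \<le> real a ^ a / real n"
proof -
  have "0 < real n" "0 < real a"
    using assms by auto
  then have "0 < (real n / real a) ^ a"
    by simp
  moreover have "(real n / real a) ^ a \<le> real (n choose a)"
    using binomial_ge_n_over_k_pow_k[OF assms(2)] by simp
  ultimately have "real n ^ (a - 1) / real (n choose a) \<le> real n ^ (a - 1) / (real n / real a) ^ a"
    using assms by (intro divide_left_mono mult_pos_pos) auto
  also have "\<dots> = real a ^ a / real n"
    using \<open>0 < real n\<close> assms(1)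
    by (simp add: field_simps power_eq_if[of "real n" a])
  finally show ?thesis .
qed

lemma card_hyp_family_many_cycles_le:
  assumes "2 \<le> a" "a \<le> n"
  shows "real (card {H \<in> hyp_family a n m. card (berge_cycles_upto H k) > n}) * real n
    \<le> real ((n choose a) choose m) * (\<Sum>l\<in>{2..k}. (real n ^ (a - 1) * real m / real (n choose a)) ^ l)"
proof -
  define F where "F = hyp_family a n m"
  define N where "N = n choose a"
  define x where "x = real n ^ (a - 1) * real m / real N"
  have "0 < real N"
    using assms by (simp add: N_def)
  have cycles_l: "real (\<Sum>H\<in>F. card (berge_cycles H l)) \<le> real (N choose m) * x ^ l"
    if "l \<in> {2..k}" for l
  proof -
    have "real (\<Sum>H\<in>F. card (berge_cycles H l)) * real N ^ l
        \<le> real (N choose m) * (real n ^ (a - 1) * real m) ^ l"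
      using sum_card_berge_cycles_le[OF assms(1), of l n m] that
      unfolding F_def N_def of_nat_le_iff[where 'a = real, symmetric]
      by (simp only: of_nat_mult of_nat_power) simp
    then show ?thesis
      using \<open>0 < real N\<close> by (simp add: x_def power_divide pos_le_divide_eq mult.assoc)
  qed
  have "(\<Sum>H\<in>F. card (berge_cycles_upto H k)) \<le> (\<Sum>H\<in>F. \<Sum>l\<in>{2..k}. card (berge_cycles H l))"
    unfolding berge_cycles_upto_def by (intro sum_mono card_UN_le) simp
  also have "\<dots> = (\<Sum>l\<in>{2..k}. \<Sum>H\<in>F. card (berge_cycles H l))"
    by (rule sum.swap)
  finally have "card {H \<in> F. card (berge_cycles_upto H k) > n} * n
      \<le> (\<Sum>l\<in>{2..k}. \<Sum>H\<in>F. card (berge_cycles H l))"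
    using card_filter_gt_mult_le_sum[OF finite_hyp_family] unfolding F_def by (rule le_trans[rotated])
  then have "real (card {H \<in> F. card (berge_cycles_upto H k) > n}) * real n
      \<le> (\<Sum>l\<in>{2..k}. real (\<Sum>H\<in>F. card (berge_cycles H l)))"
    by (simp only: of_nat_sum[symmetric] of_nat_mult[symmetric] of_nat_le_iff)
  also have "\<dots> \<le> real (N choose m) * (\<Sum>l\<in>{2..k}. x ^ l)"
    unfolding sum_distrib_left by (intro sum_mono cycles_l)
  finally show ?thesis
    unfolding F_def N_def x_def .
qed

lemma card_hyp_family_many_cycles_ratio_le:
  assumes "2 \<le> a" "2 \<le> k" "a \<le> n"
  shows "real (card {H \<in> hyp_family a n m. card (berge_cycles_upto H k) > n}) / real ((n choose a) choose m)
     \<le> (\<Sum>l\<in>{2..k}. (real a ^ a * (real m / real n powr (1 + 1 / real k))) ^ l)"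
proof -
  define C where "C = (n choose a) choose m"
  define x where "x = real n ^ (a - 1) * real m / real (n choose a)"
  define bad where "bad = {H \<in> hyp_family a n m. card (berge_cycles_upto H k) > n}"
  have "0 < real n" "0 \<le> x"
    using assms by (auto simp: x_def)
  have "x = real m * (real n ^ (a - 1) / real (n choose a))"
    by (simp add: x_def)
  also have "\<dots> \<le> real m * (real a ^ a / real n)"
    using pow_pred_div_binomial_le[of a n] assms by (intro mult_left_mono) auto
  finally have x_le: "x \<le> real a ^ a * real m / real n"
    by (simp add: mult.commute)
  have "real (card bad) / real C \<le> (\<Sum>l\<in>{2..k}. x ^ l) / real n"
  proof (cases "C = 0")
    case False
    then show ?thesis
      using card_hyp_family_many_cycles_le[OF assms(1,3), of m k] \<open>0 < real n\<close>
      unfolding bad_def C_def x_def by (simp add: field_simps)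
  qed (simp add: \<open>0 \<le> x\<close> sum_nonneg)
  also have "\<dots> \<le> (\<Sum>l\<in>{2..k}. (real a ^ a * (real m / real n powr (1 + 1 / real k))) ^ l)"
    unfolding sum_divide_distrib
  proof (intro sum_mono)
    fix l
    assume "l \<in> {2..k}"
    have "x ^ l / real n \<le> (real a ^ a * real m / real n) ^ l / real n"
      using x_le \<open>0 < real n\<close> by (intro divide_right_mono power_mono \<open>0 \<le> x\<close>) auto
    also have "\<dots> \<le> (real a ^ a * real m / real n powr (1 + 1 / real k)) ^ l"
      using \<open>l \<in> {2..k}\<close> \<open>0 < real n\<close> by (intro pow_div_le_pow_powr) auto
    finally show "x ^ l / real n \<le> (real a ^ a * (real m / real n powr (1 + 1 / real k))) ^ l"
      by simp
  qed
  finally show ?thesis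
    unfolding bad_def C_def .
qed

theorem lemma14:
  fixes a k :: nat and m :: "nat \<Rightarrow> nat"
  assumes "a \<ge> 2" and "k \<ge> 2"
    and "(\<lambda>n. real (m n) / real n powr (1 + 1 / real k)) \<longlonglongrightarrow> 0"
  shows "(\<lambda>n. real (card {H \<in> hyp_family a n (m n). card (berge_cycles_upto H k) > n})
              / real ((n choose a) choose (m n))) \<longlonglongrightarrow> 0"
proof (rule tendsto_sandwich[OF _ _ tendsto_const])
  let ?bound = "\<lambda>n. \<Sum>l\<in>{2..k}. (real a ^ a * (real (m n) / real n powr (1 + 1 / real k))) ^ l"
  show "\<forall>\<^sub>F n in sequentially. real (card {H \<in> hyp_family a n (m n). card (berge_cycles_upto H k) > n})
      / real ((n choose a) choose (m n)) \<le> ?bound n"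
    using eventually_ge_at_top[of a]
    by eventually_elim (rule card_hyp_family_many_cycles_ratio_le[OF assms(1,2)])
  have "?bound \<longlonglongrightarrow> (\<Sum>l\<in>{2..k}. (real a ^ a * 0) ^ l)"
    by (intro tendsto_intros assms(3))
  also have "(\<Sum>l\<in>{2..k}. (real a ^ a * 0) ^ l) = 0"
    by (intro sum.neutral) auto
  finally show "?bound \<longlonglongrightarrow> 0" .
qed simp

end
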